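(* Let $G$ be a mixed graph with short and long arcs. Then $G$ contains neither a directed long cycle nor a directed short cycle if and only if there exist mappings $\sigma_1,\sigma_2:V(G)\to\mathbb{N}$ such that: (1) for all $u,v\in V(G)$, $u$ and $v$ are connected by an undirected walk if and only if $(\sigma_1(u),\sigma_2(u))=(\sigma_1(v),\sigma_2(v))$; (2) for all $u,v\in V(G)$, there is a walk from $u$ to $v$ in $G$ using only edges and short arcs if and only if $\sigma_1(u)=\sigma_1(v)$; (3) for all $u,v\in V(G)$, if there is a directed short walk from $u$ to $v$ in $G$ then $\sigma_2(u)<\sigma_2(v)$; (4) for all $u,v\in V(G)$, if there is a directed long walk from $u$ to $v$ in $G$ then $\sigma_1(u)<\sigma_1(v)$.
   Context: A mixed graph $G$ has vertices, undirected edges $E(G)$ and arcs $A(G)$, where $A(G)$ is partitioned into short arcs and long arcs. A walk is a sequence $v_0,e_1,v_1,\dots,e_\ell,v_\ell$ ($\ell\ge0$) where each $e_i$ is an edge or arc joining $v_{i-1}$ and $v_i$; arcs may be traversed in either direction. A walk is undirected if it contains only edges, short if it contains a short arc but no long arc, and long if it contains a long arc. A walk from $u$ to $v$ is directed if either it is short and every short arc on it is traversed from tail to head, or it is long and every long arc on it is traversed from tail to head (short arcs then arbitrary). A cycle is a closed walk ($\ell\ge1$, $v_\ell=v_0$) with distinct $v_0,\dots,v_{\ell-1}$ and distinct $e_1,\dots,e_\ell$; it is directed short (resp. long) if it is a directed short (resp. long) walk. *)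

theory Defs
  imports Main
begin

text \<open>A mixed graph: vertex set, undirected edges, short arcs and long arcs (edge identifiers
 of type 'e, so parallel edges and loops are allowed). Every edge/arc e has endpoints
 tl e and hd e; for arcs these are tail and head, for undirected edges just the two ends.\<close>

record ('v,'e) mgraph =
  verts :: "'v set"
  uedges :: "'e set"
  sarcs :: "'e set"
  larcs :: "'e set"
  tl :: "'e \<Rightarrow> 'v"
  hd :: "'e \<Rightarrow> 'v"

definition mixed_graph :: "('v,'e) mgraph \<Rightarrow> bool" where
  "mixed_graph G \<longleftrightarrow> finite (verts G) \<and> finite (uedges G) \<and> finite (sarcs G) \<and> finite (larcs G)
     \<and> uedges G \<inter> sarcs G = {} \<and> uedges G \<inter> larcs G = {} \<and> sarcs G \<inter> larcs G = {}
     \<and> (\<forall>e \<in> uedges G \<union> sarcs G \<union> larcs G. tl G e \<in> verts G \<and> hd G e \<in> verts G)"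

definition arcs :: "('v,'e) mgraph \<Rightarrow> 'e set" where
  "arcs G = sarcs G \<union> larcs G"

definition step_ok :: "('v,'e) mgraph \<Rightarrow> 'v \<times> 'e \<times> 'v \<Rightarrow> bool" where
  "step_ok G s = (case s of (x, e, y) \<Rightarrow>
      e \<in> uedges G \<union> arcs G \<and> {x, y} = {tl G e, hd G e})"

fun walk :: "('v,'e) mgraph \<Rightarrow> 'v \<Rightarrow> ('v \<times> 'e \<times> 'v) list \<Rightarrow> 'v \<Rightarrow> bool" where
  "walk G u [] v \<longleftrightarrow> u \<in> verts G \<and> u = v"
| "walk G u ((x, e, y) # ps) v \<longleftrightarrow> x = u \<and> step_ok G (x, e, y) \<and> walk G y ps v"

definition walk_edges :: "('v \<times> 'e \<times> 'v) list \<Rightarrow> 'e list" where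
  "walk_edges ps = map (\<lambda>(x,e,y). e) ps"

definition undirected_walk :: "('v,'e) mgraph \<Rightarrow> ('v \<times> 'e \<times> 'v) list \<Rightarrow> bool" where
  "undirected_walk G ps \<longleftrightarrow> set (walk_edges ps) \<subseteq> uedges G"

definition short_walk :: "('v,'e) mgraph \<Rightarrow> ('v \<times> 'e \<times> 'v) list \<Rightarrow> bool" where
  "short_walk G ps \<longleftrightarrow> set (walk_edges ps) \<inter> sarcs G \<noteq> {} \<and> set (walk_edges ps) \<inter> larcs G = {}"

definition long_walk :: "('v,'e) mgraph \<Rightarrow> ('v \<times> 'e \<times> 'v) list \<Rightarrow> bool" where
  "long_walk G ps \<longleftrightarrow> set (walk_edges ps) \<inter> larcs G \<noteq> {}"

definition forward_on :: "('v,'e) mgraph \<Rightarrow> 'e set \<Rightarrow> ('v \<times> 'e \<times> 'v) list \<Rightarrow> bool" where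
  "forward_on G A ps \<longleftrightarrow> (\<forall>(x,e,y) \<in> set ps. e \<in> A \<longrightarrow> x = tl G e \<and> y = hd G e)"

definition directed_walk :: "('v,'e) mgraph \<Rightarrow> ('v \<times> 'e \<times> 'v) list \<Rightarrow> bool" where
  "directed_walk G ps \<longleftrightarrow>
     (short_walk G ps \<and> forward_on G (sarcs G) ps) \<or> (long_walk G ps \<and> forward_on G (larcs G) ps)"

definition directed_short_walk :: "('v,'e) mgraph \<Rightarrow> 'v \<Rightarrow> ('v \<times> 'e \<times> 'v) list \<Rightarrow> 'v \<Rightarrow> bool" where
  "directed_short_walk G u ps v \<longleftrightarrow> walk G u ps v \<and> short_walk G ps \<and> directed_walk G ps"

definition directed_long_walk :: "('v,'e) mgraph \<Rightarrow> 'v \<Rightarrow> ('v \<times> 'e \<times> 'v) list \<Rightarrow> 'v \<Rightarrow> bool" where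
  "directed_long_walk G u ps v \<longleftrightarrow> walk G u ps v \<and> long_walk G ps \<and> directed_walk G ps"

definition cycle :: "('v,'e) mgraph \<Rightarrow> 'v \<Rightarrow> ('v \<times> 'e \<times> 'v) list \<Rightarrow> bool" where
  "cycle G v0 ps \<longleftrightarrow> ps \<noteq> [] \<and> walk G v0 ps v0 \<and> distinct (map fst ps) \<and> distinct (walk_edges ps)"

definition has_directed_short_cycle :: "('v,'e) mgraph \<Rightarrow> bool" where
  "has_directed_short_cycle G \<longleftrightarrow> (\<exists>v0 ps. cycle G v0 ps \<and> directed_short_walk G v0 ps v0)"

definition has_directed_long_cycle :: "('v,'e) mgraph \<Rightarrow> bool" where
  "has_directed_long_cycle G \<longleftrightarrow> (\<exists>v0 ps. cycle G v0 ps \<and> directed_long_walk G v0 ps v0)"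

end

(*
  Walks avoiding long arcs, and undirected walks, define equivalence relations on the vertices;
  directed long (short) walks define transitive relations that can be prolonged by walks of the
  corresponding equivalence. Such a relation is irreflexive exactly when there is no directed
  long (short) cycle, because a closed directed walk shrinks to a directed cycle through any of
  its long (short) arcs. A finite strict order compatible with an equivalence is ranked by the
  number of predecessors, refined by an index of the equivalence class; this gives sigma1 and
  sigma2, and the converse is immediate since a directed cycle would give sigma v < sigma v.
*)

theory Submission
  imports Defs
begin

lemma ex_equivalence_class_index:
  fixes E :: "'a \<Rightarrow> 'a \<Rightarrow> bool"
  assumes "finite V"
    and refl: "\<And>u. u \<in> V \<Longrightarrow> E u u"
    and sym: "\<And>u v. u \<in> V \<Longrightarrow> v \<in> V \<Longrightarrow> E u v \<Longrightarrow> E v u"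
    and trans: "\<And>u v w. u \<in> V \<Longrightarrow> v \<in> V \<Longrightarrow> w \<in> V \<Longrightarrow> E u v \<Longrightarrow> E v w \<Longrightarrow> E u w"
  shows "\<exists>(g :: 'a \<Rightarrow> nat) n. (\<forall>u\<in>V. g u < n) \<and> (\<forall>u\<in>V. \<forall>v\<in>V. g u = g v \<longleftrightarrow> E u v)"
proof -
  define cls where "cls u = {w \<in> V. E u w}" for u
  obtain h :: "'a set \<Rightarrow> nat" and n where h: "h ` cls ` V = {i. i < n}" "inj_on h (cls ` V)"
    using finite_imp_inj_to_nat_seg[of "cls ` V"] assms(1) by blast
  have cls_eq: "cls u = cls v \<longleftrightarrow> E u v" if "u \<in> V" "v \<in> V" for u v
  proof
    assume "cls u = cls v"
    then show "E u v" using refl[OF that(2)] that by (auto simp: cls_def)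
  next
    assume "E u v"
    then have "E u w \<longleftrightarrow> E v w" if "w \<in> V" for w
      using trans[of u v w] trans[of v u w] sym[of u v] that \<open>u \<in> V\<close> \<open>v \<in> V\<close> by blast
    then show "cls u = cls v" by (auto simp: cls_def)
  qed
  have "h (cls u) = h (cls v) \<longleftrightarrow> E u v" if "u \<in> V" "v \<in> V" for u v
    using inj_on_eq_iff[OF h(2)] cls_eq that by simp
  moreover have "h (cls u) < n" if "u \<in> V" for u
    using h(1) that by blast
  ultimately show ?thesis by (intro exI[of _ "h \<circ> cls"] exI[of _ n]) simp
qed

lemma ex_rank_compatible_with_equivalence:
  fixes E Q :: "'a \<Rightarrow> 'a \<Rightarrow> bool"
  assumes "finite V"
    and refl: "\<And>u. u \<in> V \<Longrightarrow> E u u"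
    and sym: "\<And>u v. u \<in> V \<Longrightarrow> v \<in> V \<Longrightarrow> E u v \<Longrightarrow> E v u"
    and trans: "\<And>u v w. u \<in> V \<Longrightarrow> v \<in> V \<Longrightarrow> w \<in> V \<Longrightarrow> E u v \<Longrightarrow> E v w \<Longrightarrow> E u w"
    and Q_trans: "\<And>u v w. u \<in> V \<Longrightarrow> v \<in> V \<Longrightarrow> w \<in> V \<Longrightarrow> Q u v \<Longrightarrow> Q v w \<Longrightarrow> Q u w"
    and Q_irrefl: "\<And>u. u \<in> V \<Longrightarrow> \<not> Q u u"
    and Q_E: "\<And>u v w. u \<in> V \<Longrightarrow> v \<in> V \<Longrightarrow> w \<in> V \<Longrightarrow> Q u v \<Longrightarrow> E v w \<Longrightarrow> Q u w"
  shows "\<exists>f :: 'a \<Rightarrow> nat. (\<forall>u\<in>V. \<forall>v\<in>V. f u = f v \<longleftrightarrow> E u v) \<and> (\<forall>u\<in>V. \<forall>v\<in>V. Q u v \<longrightarrow> f u < f v)"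
proof -
  obtain g :: "'a \<Rightarrow> nat" and n where g: "\<forall>u\<in>V. g u < n" "\<forall>u\<in>V. \<forall>v\<in>V. g u = g v \<longleftrightarrow> E u v"
    using ex_equivalence_class_index[of V E] assms(1) refl sym trans by blast
  define p where "p u = card {w \<in> V. Q w u}" for u
  have p_eq: "p u = p v" if "u \<in> V" "v \<in> V" "E u v" for u v
  proof -
    have "{w \<in> V. Q w u} = {w \<in> V. Q w v}"
      using that by (auto intro: Q_E[of _ u v] Q_E[of _ v u] sym)
    then show ?thesis by (simp add: p_def)
  qed
  have p_less: "p u < p v" if "u \<in> V" "v \<in> V" "Q u v" for u v
  proof -
    have "{w \<in> V. Q w u} \<subseteq> {w \<in> V. Q w v}" using that by (auto intro: Q_trans)
    moreover have "u \<in> {w \<in> V. Q w v} - {w \<in> V. Q w u}" using that Q_irrefl by simp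
    ultimately have "{w \<in> V. Q w u} \<subset> {w \<in> V. Q w v}" by blast
    then show ?thesis unfolding p_def using assms(1) by (simp add: psubset_card_mono)
  qed
  \<comment> \<open>\<open>p\<close> is the leading digit and the class index \<open>g\<close> the trailing digit in base \<open>n\<close>\<close>
  define f where "f u = p u * n + g u" for u
  have f_div_mod: "f u div n = p u" "f u mod n = g u" if "u \<in> V" for u
  proof -
    have "g u < n" using g(1) that by blast
    then show "f u div n = p u" "f u mod n = g u" by (simp_all add: f_def)
  qed
  have "f u = f v \<longleftrightarrow> E u v" if "u \<in> V" "v \<in> V" for u v
    using that f_div_mod g(2) p_eq by (metis f_def)
  moreover have "f u < f v" if "u \<in> V" "v \<in> V" "Q u v" for u v
  proof -
    have "f u < Suc (p u) * n" using g(1) that by (simp add: f_def)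
    also have "\<dots> \<le> p v * n" using p_less[OF that] by (intro mult_le_mono1) simp
    also have "\<dots> \<le> f v" by (simp add: f_def)
    finally show ?thesis .
  qed
  ultimately show ?thesis by blast
qed

lemma walk_append: "walk G u ps v \<Longrightarrow> walk G v qs w \<Longrightarrow> walk G u (ps @ qs) w"
  by (induction G u ps v rule: walk.induct) auto

lemma walk_last_in_verts: "walk G u ps v \<Longrightarrow> v \<in> verts G"
  by (induction G u ps v rule: walk.induct) auto

lemma walk_step_ok: "walk G u ps v \<Longrightarrow> s \<in> set ps \<Longrightarrow> step_ok G s"
  by (induction G u ps v rule: walk.induct) auto

lemma walk_first_in_verts: "mixed_graph G \<Longrightarrow> walk G u ps v \<Longrightarrow> u \<in> verts G"
  by (cases ps) (auto simp: mixed_graph_def step_ok_def arcs_def doubleton_eq_iff)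

lemma walk_append_iff:
  "mixed_graph G \<Longrightarrow> walk G u (ps @ qs) w \<longleftrightarrow> (\<exists>v. walk G u ps v \<and> walk G v qs w)"
  by (induction ps arbitrary: u) (auto intro: walk_first_in_verts walk_append)

lemma walk_step_target:
  "walk G u ps v \<Longrightarrow> (x, e, y) \<in> set ps \<Longrightarrow> y \<in> set (map fst ps) \<or> y = v"
proof (induction G u ps v rule: walk.induct)
  case (2 G u x' e' y' ps v)
  then show ?case by (cases ps) force+
qed simp

lemma walk_edges_Nil [simp]: "walk_edges [] = []"
  and walk_edges_Cons [simp]: "walk_edges ((x, e, y) # ps) = e # walk_edges ps"
  and walk_edges_append [simp]: "walk_edges (ps @ qs) = walk_edges ps @ walk_edges qs"
  by (simp_all add: walk_edges_def)

lemma walk_rev: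
  "mixed_graph G \<Longrightarrow> walk G u ps v \<Longrightarrow> walk G v (rev (map (\<lambda>(x, e, y). (y, e, x)) ps)) u"
proof (induction G u ps v rule: walk.induct)
  case (1 G u v)
  then show ?case by auto
next
  case (2 G u x e y ps v)
  have "u \<in> verts G" using 2(2,3) by (rule walk_first_in_verts)
  with 2 have "walk G v (rev (map (\<lambda>(x, e, y). (y, e, x)) ps)) y" "walk G y [(y, e, u)] u"
    by (auto simp: step_ok_def insert_commute)
  then show ?case using 2 by (auto intro: walk_append)
qed

lemma walk_to_path:
  "mixed_graph G \<Longrightarrow> walk G u ps v \<Longrightarrow>
    \<exists>qs. walk G u qs v \<and> set qs \<subseteq> set ps \<and> distinct (map fst qs) \<and> v \<notin> set (map fst qs)"
proof (induction ps arbitrary: u)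
  case Nil
  then show ?case by force
next
  case (Cons s ps)
  then obtain e y where s: "s = (u, e, y)" and st: "step_ok G (u, e, y)" and w: "walk G y ps v"
    by (cases s) auto
  from Cons.IH[OF Cons.prems(1) w] obtain qs where qs: "walk G y qs v" "set qs \<subseteq> set ps"
    "distinct (map fst qs)" "v \<notin> set (map fst qs)" by blast
  consider "u = v" | "u \<in> set (map fst qs)" | "u \<noteq> v" "u \<notin> set (map fst qs)" by blast
  then show ?case
  proof cases
    case 1
    then show ?thesis using walk_last_in_verts[OF w] by (intro exI[of _ "[]"]) auto
  next
    case 2
    then obtain e' z where "(u, e', z) \<in> set qs" by force
    then obtain P C where split: "qs = P @ (u, e', z) # C" by (meson split_list)
    then have "walk G u ((u, e', z) # C) v" using qs(1) walk_append_iff[OF Cons.prems(1)] by auto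
    then show ?thesis using qs split by (intro exI[of _ "(u, e', z) # C"]) auto
  next
    case 3
    then show ?thesis using st qs s by (intro exI[of _ "(u, e, y) # qs"]) auto
  qed
qed

lemma path_distinct_edges:
  "walk G u ps v \<Longrightarrow> distinct (map fst ps) \<Longrightarrow> v \<notin> set (map fst ps) \<Longrightarrow> distinct (walk_edges ps)"
proof (induction G u ps v rule: walk.induct)
  case (1 G u v)
  then show ?case by simp
next
  case (2 G u x e y ps v)
  from 2(2) have st: "step_ok G (x, e, y)" and w: "walk G y ps v" by auto
  have "e \<notin> set (walk_edges ps)"
  proof
    assume "e \<in> set (walk_edges ps)"
    then obtain p q where pq: "(p, e, q) \<in> set ps" by (auto simp: walk_edges_def)
    have "{p, q} = {x, y}"
      using walk_step_ok[OF w pq] st by (auto simp: step_ok_def)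
    moreover have "p \<noteq> x" using 2(3) pq by force
    ultimately have "q = x" by (auto simp: doubleton_eq_iff)
    then show False using walk_step_target[OF w pq] 2(2-4) by auto
  qed
  then show ?case using 2 by auto
qed

definition connected_avoiding :: "('v, 'e) mgraph \<Rightarrow> 'e set \<Rightarrow> 'v \<Rightarrow> 'v \<Rightarrow> bool" where
  "connected_avoiding G B u v \<longleftrightarrow> (\<exists>ps. walk G u ps v \<and> set (walk_edges ps) \<inter> B = {})"

definition forward_walk ::
    "('v, 'e) mgraph \<Rightarrow> 'e set \<Rightarrow> 'e set \<Rightarrow> 'v \<Rightarrow> ('v \<times> 'e \<times> 'v) list \<Rightarrow> 'v \<Rightarrow> bool" where
  "forward_walk G A B u ps v \<longleftrightarrow> walk G u ps v \<and> set (walk_edges ps) \<inter> A \<noteq> {}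
     \<and> set (walk_edges ps) \<inter> B = {} \<and> forward_on G A ps"

lemma directed_long_walk_iff_forward_walk:
  "directed_long_walk G u ps v \<longleftrightarrow> forward_walk G (larcs G) {} u ps v"
  by (auto simp: directed_long_walk_def directed_walk_def forward_walk_def short_walk_def long_walk_def)

lemma directed_short_walk_iff_forward_walk:
  "directed_short_walk G u ps v \<longleftrightarrow> forward_walk G (sarcs G) (larcs G) u ps v"
  by (auto simp: directed_short_walk_def directed_walk_def forward_walk_def short_walk_def long_walk_def)

lemma forward_on_append [simp]: "forward_on G A (ps @ qs) \<longleftrightarrow> forward_on G A ps \<and> forward_on G A qs"
  unfolding forward_on_def by (simp add: ball_Un)

lemma forward_on_if_disjoint: "set (walk_edges ps) \<inter> A = {} \<Longrightarrow> forward_on G A ps"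
  by (force simp: forward_on_def walk_edges_def)

lemma connected_avoiding_refl: "u \<in> verts G \<Longrightarrow> connected_avoiding G B u u"
  unfolding connected_avoiding_def by (intro exI[of _ "[]"]) simp

lemma connected_avoiding_sym:
  assumes "mixed_graph G" and "connected_avoiding G B u v"
  shows "connected_avoiding G B v u"
proof -
  obtain ps where "walk G u ps v" and "set (walk_edges ps) \<inter> B = {}"
    using assms(2) by (auto simp: connected_avoiding_def)
  moreover have "set (walk_edges (rev (map (\<lambda>(x, e, y). (y, e, x)) ps))) = set (walk_edges ps)"
    by (force simp: walk_edges_def)
  ultimately show ?thesis
    using walk_rev[OF assms(1)] unfolding connected_avoiding_def by metis
qed

lemma connected_avoiding_trans:
  "connected_avoiding G B u v \<Longrightarrow> connected_avoiding G B v w \<Longrightarrow> connected_avoiding G B u w"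
  unfolding connected_avoiding_def by (metis walk_append walk_edges_append set_append Int_Un_distrib2 Un_empty)

lemma connected_avoiding_mono: "B' \<subseteq> B \<Longrightarrow> connected_avoiding G B u v \<Longrightarrow> connected_avoiding G B' u v"
  unfolding connected_avoiding_def by blast

lemma walk_edges_in_graph: "walk G u ps v \<Longrightarrow> set (walk_edges ps) \<subseteq> uedges G \<union> arcs G"
  by (induction G u ps v rule: walk.induct) (auto simp: step_ok_def)

lemma undirected_walk_iff:
  "mixed_graph G \<Longrightarrow> walk G u ps v \<Longrightarrow> undirected_walk G ps \<longleftrightarrow> set (walk_edges ps) \<inter> arcs G = {}"
  using walk_edges_in_graph by (fastforce simp: undirected_walk_def mixed_graph_def arcs_def)

lemma undirected_connected_iff:
  "mixed_graph G \<Longrightarrow>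
    (\<exists>ps. walk G u ps v \<and> undirected_walk G ps) \<longleftrightarrow> connected_avoiding G (arcs G) u v"
  using undirected_walk_iff by (fastforce simp: connected_avoiding_def)

lemma forward_walk_append:
  "forward_walk G A B u ps v \<Longrightarrow> forward_walk G A B v qs w \<Longrightarrow> forward_walk G A B u (ps @ qs) w"
  by (auto simp: forward_walk_def intro: walk_append)

lemma forward_walk_append_avoiding:
  assumes fw: "forward_walk G A B u ps v" and "connected_avoiding G (A \<union> B) v w"
  shows "\<exists>qs. forward_walk G A B u qs w"
proof -
  from assms obtain qs where "walk G v qs w" and "set (walk_edges qs) \<inter> (A \<union> B) = {}"
    by (auto simp: connected_avoiding_def)
  then have "forward_walk G A B u (ps @ qs) w"
    using fw by (auto simp: forward_walk_def intro: walk_append forward_on_if_disjoint)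
  then show ?thesis ..
qed

lemma walk_edges_mono: "set ps \<subseteq> set qs \<Longrightarrow> set (walk_edges ps) \<subseteq> set (walk_edges qs)"
  unfolding walk_edges_def by (simp add: image_mono)

lemma forward_on_mono: "set ps \<subseteq> set qs \<Longrightarrow> forward_on G A qs \<Longrightarrow> forward_on G A ps"
  by (auto simp: forward_on_def)

lemma closed_forward_walk_imp_cycle:
  assumes mg: "mixed_graph G" and fw: "forward_walk G A B u ps u"
  shows "\<exists>x cs. cycle G x cs \<and> forward_walk G A B x cs x"
proof -
  obtain x a y where xay: "(x, a, y) \<in> set ps" "a \<in> A"
    using fw by (force simp: forward_walk_def walk_edges_def)
  then obtain P C where ps: "ps = P @ (x, a, y) # C" by (meson split_list)
  then obtain m where "walk G u P m" "walk G m ((x, a, y) # C) u"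
    using fw walk_append_iff[OF mg] by (auto simp: forward_walk_def)
  then have st: "step_ok G (x, a, y)" and "walk G y (C @ P) x"
    by (auto intro: walk_append)
  then obtain qs where qs: "walk G y qs x" "set qs \<subseteq> set (C @ P)"
    "distinct (map fst qs)" "x \<notin> set (map fst qs)"
    using walk_to_path[OF mg] by blast
  define cs where "cs = (x, a, y) # qs"
  have sub: "set cs \<subseteq> set ps" using qs(2) ps by (auto simp: cs_def)
  have fwd: "forward_on G A cs" using forward_on_mono[OF sub] fw by (simp add: forward_walk_def)
  \<comment> \<open>every occurrence of \<open>a\<close> in \<open>ps\<close> is traversed forwards, so it starts at \<open>x\<close>, which the path \<open>qs\<close> never leaves\<close>
  have "a \<notin> set (walk_edges qs)"
  proof
    assume "a \<in> set (walk_edges qs)"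
    then obtain p q where "(p, a, q) \<in> set qs" by (auto simp: walk_edges_def)
    then have "p = x" and "p \<in> set (map fst qs)"
      using fwd xay(2) by (force simp: cs_def forward_on_def)+
    then show False using qs(4) by simp
  qed
  then have "cycle G x cs"
    using qs st path_distinct_edges[OF qs(1,3,4)] by (simp add: cycle_def cs_def)
  moreover have "forward_walk G A B x cs x"
    using qs(1) st xay(2) fwd walk_edges_mono[OF sub] fw by (auto simp: forward_walk_def cs_def)
  ultimately show ?thesis by blast
qed

lemma ex_rank_of_acyclic_forward_walks:
  assumes mg: "mixed_graph G" and acyclic: "\<not> (\<exists>x cs. cycle G x cs \<and> forward_walk G A B x cs x)"
  shows "\<exists>f :: 'v \<Rightarrow> nat.
    (\<forall>u\<in>verts G. \<forall>v\<in>verts G. f u = f v \<longleftrightarrow> connected_avoiding G (A \<union> B) u v) \<and>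
    (\<forall>u\<in>verts G. \<forall>v\<in>verts G. (\<exists>ps. forward_walk G A B u ps v) \<longrightarrow> f u < f v)"
proof (rule ex_rank_compatible_with_equivalence)
  show "finite (verts G)" using mg by (simp add: mixed_graph_def)
  show "\<not> (\<exists>ps. forward_walk G A B u ps u)" for u
    using closed_forward_walk_imp_cycle[OF mg] acyclic by blast
qed (blast intro: connected_avoiding_refl connected_avoiding_sym[OF mg] connected_avoiding_trans
    forward_walk_append forward_walk_append_avoiding)+

theorem mainTheorem15:
  fixes G :: "('v,'e) mgraph"
  assumes "mixed_graph G"
  shows "(\<not> has_directed_long_cycle G \<and> \<not> has_directed_short_cycle G) \<longleftrightarrow>
    (\<exists>(\<sigma>1 :: 'v \<Rightarrow> nat) (\<sigma>2 :: 'v \<Rightarrow> nat).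
       (\<forall>u \<in> verts G. \<forall>v \<in> verts G.
          (\<exists>ps. walk G u ps v \<and> undirected_walk G ps) \<longleftrightarrow> (\<sigma>1 u, \<sigma>2 u) = (\<sigma>1 v, \<sigma>2 v)) \<and>
       (\<forall>u \<in> verts G. \<forall>v \<in> verts G.
          (\<exists>ps. walk G u ps v \<and> set (walk_edges ps) \<inter> larcs G = {}) \<longleftrightarrow> \<sigma>1 u = \<sigma>1 v) \<and>
       (\<forall>u \<in> verts G. \<forall>v \<in> verts G.
          (\<exists>ps. directed_short_walk G u ps v) \<longrightarrow> \<sigma>2 u < \<sigma>2 v) \<and>
       (\<forall>u \<in> verts G. \<forall>v \<in> verts G.
          (\<exists>ps. directed_long_walk G u ps v) \<longrightarrow> \<sigma>1 u < \<sigma>1 v))"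
proof (intro iffI, goal_cases)
  case 1
  obtain \<sigma>1 :: "'v \<Rightarrow> nat" where \<sigma>1:
    "\<forall>u\<in>verts G. \<forall>v\<in>verts G. \<sigma>1 u = \<sigma>1 v \<longleftrightarrow> connected_avoiding G (larcs G) u v"
    "\<forall>u\<in>verts G. \<forall>v\<in>verts G. (\<exists>ps. directed_long_walk G u ps v) \<longrightarrow> \<sigma>1 u < \<sigma>1 v"
    using ex_rank_of_acyclic_forward_walks[OF assms, of "larcs G" "{}"] 1
    by (auto simp: has_directed_long_cycle_def directed_long_walk_iff_forward_walk)
  obtain \<sigma>2 :: "'v \<Rightarrow> nat" where \<sigma>2:
    "\<forall>u\<in>verts G. \<forall>v\<in>verts G. \<sigma>2 u = \<sigma>2 v \<longleftrightarrow> connected_avoiding G (arcs G) u v"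
    "\<forall>u\<in>verts G. \<forall>v\<in>verts G. (\<exists>ps. directed_short_walk G u ps v) \<longrightarrow> \<sigma>2 u < \<sigma>2 v"
    using ex_rank_of_acyclic_forward_walks[OF assms, of "sarcs G" "larcs G"] 1
    by (auto simp: has_directed_short_cycle_def directed_short_walk_iff_forward_walk arcs_def)
  have "connected_avoiding G (arcs G) u v \<Longrightarrow> connected_avoiding G (larcs G) u v" for u v
    by (rule connected_avoiding_mono) (auto simp: arcs_def)
  then have "\<forall>u\<in>verts G. \<forall>v\<in>verts G.
      (\<exists>ps. walk G u ps v \<and> undirected_walk G ps) \<longleftrightarrow> (\<sigma>1 u, \<sigma>2 u) = (\<sigma>1 v, \<sigma>2 v)"
    using \<sigma>1(1) \<sigma>2(1) undirected_connected_iff[OF assms] by auto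
  then show ?case using \<sigma>1 \<sigma>2 unfolding connected_avoiding_def by blast
next
  case 2
  then obtain \<sigma>1 \<sigma>2 :: "'v \<Rightarrow> nat" where
    "\<forall>u \<in> verts G. \<forall>v \<in> verts G. (\<exists>ps. directed_short_walk G u ps v) \<longrightarrow> \<sigma>2 u < \<sigma>2 v"
    "\<forall>u \<in> verts G. \<forall>v \<in> verts G. (\<exists>ps. directed_long_walk G u ps v) \<longrightarrow> \<sigma>1 u < \<sigma>1 v"
    by blast
  then show ?case
    unfolding has_directed_long_cycle_def has_directed_short_cycle_def cycle_def
    by (metis less_irrefl walk_last_in_verts)
qed

end
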